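(* Let $\mathcal{P}$ be a finite poset with $p$ elements such that $\mathcal{C}(\mathcal{P})$ is simplicial. Then $\mathbf{M}_{\mathcal{P}}^{-1}$ maps $\mathcal{C}(\mathcal{P})$ bijectively onto $\mathbb{R}^p_+$.
   Context: The order cone $\mathcal{C}(\mathcal{P})\subset\mathbb{R}^{\mathcal{P}}$ is the set of functions $\mathbf{f}$ on $\mathcal{P}$ with $f_x\ge0$ for all $x$ and $f_x\le f_y$ whenever $x\preceq y$. A cone in $\mathbb{R}^p$ is simplicial if it is the conical hull of $p$ linearly independent vectors. With standard basis $\{\mathbf{e}_x\}$ of $\mathbb{R}^{\mathcal{P}}\cong\mathbb{R}^p$, the Möbius transform $\mathbf{M}_{\mathcal{P}}$ is the linear map with $\mathbf{M}_{\mathcal{P}}(\mathbf{e}_x)=\sum_{y:\,x\preceq y}\mathbf{e}_y$; $\mathbb{R}^p_+$ denotes the vectors with nonnegative entries. *)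

theory Defs
  imports "HOL-Analysis.Analysis"
begin

text \<open>The finite poset is a finite ordered type; functions on it are vectors of type (real, 'n) vec, i.e. real ^ 'n.\<close>

definition order_cone :: "(real, 'n::{finite,order}) vec set" where
  "order_cone = {f. (\<forall>x. 0 \<le> f $ x) \<and> (\<forall>x y. x \<le> y \<longrightarrow> f $ x \<le> f $ y)}"

definition simplicial :: "(real, 'n::finite) vec set \<Rightarrow> bool" where
  "simplicial C \<longleftrightarrow> (\<exists>B. finite B \<and> card B = CARD('n) \<and> independent B \<and> C = convex_cone hull B)"

text \<open>Moebius transform: M(e_x) = sum of e_y over y with x <= y, i.e. (M f)_y = sum of f_x over x <= y.\<close>
definition mobius :: "(real, 'n::{finite,order}) vec \<Rightarrow> (real, 'n) vec" where
  "mobius f = (\<chi> y. \<Sum>x\<in>{x. x \<le> y}. f $ x)"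

definition nonneg_orthant :: "(real, 'n::finite) vec set" where
  "nonneg_orthant = {f. \<forall>x. 0 \<le> f $ x}"

end

theory Submission
  imports Defs
begin

text \<open>The Moebius transform maps the nonnegative orthant onto the conical hull of the
  indicators of the principal up-sets \<open>\<up>x\<close>, which lies in the order cone. Each such
  indicator spans an extreme ray of the order cone: if a sum of elements of the cone equals
  it, every summand is a multiple of it. Hence every generating set of the cone contains a
  positive multiple of each \<open>\<up>x\<close>; when the cone is simplicial its \<open>p\<close> generators are
  therefore exactly these multiples, so the order cone is the Moebius image of the orthant,
  and the injective map \<open>M\<close> is a bijection between them.\<close>

lemma convex_cone_hull_finite_nonneg_combination:
  fixes S :: "'a::real_vector set"
  assumes "finite S" and "y \<in> convex_cone hull S"
  obtains u where "\<forall>s\<in>S. 0 \<le> u s" and "y = (\<Sum>s\<in>S. u s *\<^sub>R s)"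
proof -
  consider "y = 0" | c x where "0 \<le> c" "x \<in> convex hull S" "y = c *\<^sub>R x"
    using assms(2) unfolding convex_cone_hull_convex_hull by auto
  then show thesis
  proof cases
    case 1
    then show ?thesis
      using that[of "\<lambda>_. 0"] by simp
  next
    case (2 c x)
    then obtain u where "\<forall>s\<in>S. 0 \<le> u s" "x = (\<Sum>s\<in>S. u s *\<^sub>R s)"
      using convex_hull_finite[OF assms(1)] by auto
    then show ?thesis
      using that[of "\<lambda>s. c * u s"] \<open>0 \<le> c\<close> \<open>y = c *\<^sub>R x\<close>
      by (simp add: scaleR_sum_right)
  qed
qed

definition upset_indicator :: "'n::{finite,order} \<Rightarrow> (real, 'n) vec" where
  "upset_indicator x = (\<chi> y. if x \<le> y then 1 else 0)"

lemma linear_mobius: "linear (mobius :: (real, 'n::{finite,order}) vec \<Rightarrow> _)"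
  by (rule linearI) (simp_all add: mobius_def vec_eq_iff sum.distrib sum_distrib_left)

lemma mobius_axis: "mobius (axis x t) = t *\<^sub>R upset_indicator x"
proof -
  have "(\<Sum>z\<in>{z. z \<le> y}. axis x t $ z) = (if x \<le> y then t else 0)" for y
    by (simp add: axis_def)
  then show ?thesis
    by (simp add: mobius_def upset_indicator_def vec_eq_iff)
qed

lemma inj_mobius: "inj (mobius :: (real, 'n::{finite,order}) vec \<Rightarrow> _)"
proof -
  have "h = 0" if h0: "mobius h = 0" for h :: "(real, 'n) vec"
  proof (rule ccontr)
    assume "h \<noteq> 0"
    then obtain y where y: "h $ y \<noteq> 0" and minimal: "\<And>z. h $ z \<noteq> 0 \<Longrightarrow> z \<le> y \<Longrightarrow> z = y"
      using finite_has_minimal[of "{y. h $ y \<noteq> 0}"] by (auto simp: vec_eq_iff)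
    have "h $ z = 0" if "z \<le> y" "z \<noteq> y" for z
      using minimal that by blast
    then have "mobius h $ y = (\<Sum>z\<in>{z. z \<le> y}. if z = y then h $ y else 0)"
      unfolding mobius_def vec_lambda_beta by (intro sum.cong) auto
    also have "\<dots> = h $ y"
      by (simp add: sum.delta)
    finally show False
      using h0 y by simp
  qed
  then show ?thesis
    using linear_inj_iff_eq_0[OF linear_mobius] by blast
qed

lemma mobius_nonneg_orthant_subset_order_cone: "mobius ` nonneg_orthant \<subseteq> order_cone"
proof
  fix f assume "f \<in> mobius ` nonneg_orthant"
  then obtain g where g: "\<And>x. 0 \<le> g $ x" and f: "f = mobius g"
    by (auto simp: nonneg_orthant_def)
  have "f $ y \<le> f $ z" if "y \<le> z" for y z
    using that g by (auto simp: f mobius_def intro!: sum_mono2 intro: order_trans)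
  then show "f \<in> order_cone"
    using g by (auto simp: order_cone_def f mobius_def intro: sum_nonneg)
qed

lemma order_cone_summand_of_upset_indicator:
  fixes w :: "'i \<Rightarrow> (real, 'n::{finite,order}) vec"
  assumes "finite S" and cone: "\<And>j. j \<in> S \<Longrightarrow> w j \<in> order_cone"
    and sum: "sum w S = upset_indicator x" and "i \<in> S"
  shows "w i = (w i $ x) *\<^sub>R upset_indicator x"
proof -
  have component_sum: "(\<Sum>j\<in>S. w j $ y) = (if x \<le> y then 1 else 0)" for y
    using sum by (simp add: sum_component[symmetric] upset_indicator_def)
  have "w i $ y = ((w i $ x) *\<^sub>R upset_indicator x) $ y" for y
  proof (cases "x \<le> y")
    case False
    have "\<forall>j\<in>S. 0 \<le> w j $ y"
      using cone by (auto simp: order_cone_def)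
    then have "\<forall>j\<in>S. w j $ y = 0"
      using False component_sum[of y] sum_nonneg_eq_0_iff[OF \<open>finite S\<close>, of "\<lambda>j. w j $ y"]
      by auto
    then show ?thesis
      using False \<open>i \<in> S\<close> by (simp add: upset_indicator_def)
  next
    case True
    have "(\<Sum>j\<in>S. w j $ y - w j $ x) = 0"
      using component_sum[of y] component_sum[of x] True by (simp add: sum_subtractf)
    moreover have "\<forall>j\<in>S. 0 \<le> w j $ y - w j $ x"
      using cone True by (auto simp: order_cone_def)
    ultimately have "\<forall>j\<in>S. w j $ y - w j $ x = 0"
      using sum_nonneg_eq_0_iff[OF \<open>finite S\<close>, of "\<lambda>j. w j $ y - w j $ x"] by auto
    then show ?thesis
      using True \<open>i \<in> S\<close> by (simp add: upset_indicator_def)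
  qed
  then show ?thesis
    using vec_eq_iff by blast
qed

lemma upset_indicator_in_order_cone: "upset_indicator x \<in> order_cone"
  unfolding order_cone_def upset_indicator_def by (auto intro: order_trans)

lemma scaled_upset_indicator_eq_imp_eq:
  assumes "0 < s" "0 < t" "s *\<^sub>R upset_indicator x = t *\<^sub>R upset_indicator y"
  shows "x = y"
proof -
  have "(s *\<^sub>R upset_indicator x) $ z = (t *\<^sub>R upset_indicator y) $ z" for z
    using assms(3) by simp
  from this[of x] this[of y] show ?thesis
    using assms(1,2) by (auto simp: upset_indicator_def split: if_splits)
qed

lemma order_cone_generators_contain_upset_multiple:
  assumes "finite B" "0 \<notin> B" and hull: "order_cone = convex_cone hull B"
  obtains t where "0 < t" "t *\<^sub>R upset_indicator x \<in> B"
proof -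
  obtain u where u: "\<forall>b\<in>B. 0 \<le> u b" and sum: "upset_indicator x = (\<Sum>b\<in>B. u b *\<^sub>R b)"
    using convex_cone_hull_finite_nonneg_combination[OF \<open>finite B\<close>] upset_indicator_in_order_cone hull
    by metis
  have "upset_indicator x \<noteq> 0"
    by (auto simp: upset_indicator_def vec_eq_iff)
  then obtain b where b: "b \<in> B" and "u b \<noteq> 0"
    using sum sum.neutral[of B "\<lambda>b. u b *\<^sub>R b"] by force
  have "\<And>c. c \<in> B \<Longrightarrow> u c *\<^sub>R c \<in> order_cone"
    unfolding hull using u by (simp add: convex_cone_hull_mul hull_inc)
  then have "u b *\<^sub>R b = (u b * b $ x) *\<^sub>R upset_indicator x"
    using order_cone_summand_of_upset_indicator[OF \<open>finite B\<close> _ sum[symmetric] b] by simp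
  then have "u b *\<^sub>R b = u b *\<^sub>R ((b $ x) *\<^sub>R upset_indicator x)"
    by (simp only: scaleR_scaleR)
  then have b_eq: "b = (b $ x) *\<^sub>R upset_indicator x"
    using \<open>u b \<noteq> 0\<close> scaleR_cancel_left by blast
  show thesis
  proof (rule that)
    have "b $ x \<noteq> 0"
      using b_eq b \<open>0 \<notin> B\<close> by (metis scale_zero_left)
    moreover have "0 \<le> b $ x"
      using b hull hull_inc[of b B] by (auto simp: order_cone_def)
    ultimately show "0 < b $ x"
      by simp
    show "(b $ x) *\<^sub>R upset_indicator x \<in> B"
      using b b_eq by metis
  qed
qed

lemma simplicial_generators_subset_mobius_image:
  assumes "finite B" "card B = CARD('n)" "0 \<notin> B"
    and hull: "(order_cone :: (real, 'n::{finite,order}) vec set) = convex_cone hull B"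
  shows "B \<subseteq> mobius ` nonneg_orthant"
proof -
  have "\<forall>x. \<exists>t. 0 < t \<and> t *\<^sub>R upset_indicator x \<in> B"
    using order_cone_generators_contain_upset_multiple[OF assms(1,3) hull] by blast
  then obtain t where t: "\<And>x. 0 < t x" "\<And>x. t x *\<^sub>R upset_indicator x \<in> B"
    by metis
  define g where "g x = t x *\<^sub>R upset_indicator x" for x
  have "inj g"
  proof (rule injI)
    fix x y assume "g x = g y"
    then show "x = y"
      using t(1) by (intro scaled_upset_indicator_eq_imp_eq[of "t x" "t y"]) (simp_all add: g_def)
  qed
  have "g ` UNIV \<subseteq> B"
    using t(2) by (auto simp: g_def)
  moreover have "card (g ` UNIV) = card B"
    using card_image[OF \<open>inj g\<close>] assms(2) by simp
  ultimately have "g ` UNIV = B"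
    using card_subset_eq[OF \<open>finite B\<close>] by blast
  moreover have "g x \<in> mobius ` nonneg_orthant" for x
  proof
    show "g x = mobius (axis x (t x))"
      by (simp add: g_def mobius_axis)
    show "axis x (t x) \<in> nonneg_orthant"
      using t(1)[of x] by (simp add: nonneg_orthant_def axis_def)
  qed
  ultimately show ?thesis
    by blast
qed

lemma simplicial_order_cone_eq_mobius_image:
  assumes "simplicial (order_cone :: (real, 'n::{finite,order}) vec set)"
  shows "order_cone = mobius ` (nonneg_orthant :: (real, 'n) vec set)"
proof -
  obtain B where B: "finite B" "card B = CARD('n)" "independent B"
    and hull: "(order_cone :: (real, 'n) vec set) = convex_cone hull B"
    using assms unfolding simplicial_def by blast
  have "0 \<notin> B"
    using B(3) dependent_zero by blast
  have "convex_cone (mobius ` (nonneg_orthant :: (real, 'n) vec set))"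
    by (rule convex_cone_linear_image)
      (simp add: linear_mobius, auto simp: convex_cone_iff nonneg_orthant_def)
  with simplicial_generators_subset_mobius_image[OF B(1,2) \<open>0 \<notin> B\<close> hull]
  have "convex_cone hull B \<subseteq> mobius ` nonneg_orthant"
    by (rule hull_minimal)
  then show ?thesis
    using hull mobius_nonneg_orthant_subset_order_cone by blast
qed

theorem lemma4:
  assumes "simplicial (order_cone :: (real, 'n::{finite,order}) vec set)"
  shows "bij_betw (inv (mobius :: (real, 'n) vec \<Rightarrow> (real, 'n) vec)) order_cone nonneg_orthant"
  unfolding simplicial_order_cone_eq_mobius_image[OF assms]
  by (rule inj_imp_bij_betw_inv[OF inj_mobius])

end
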